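(* Let $\mathcal Z$ be a finite zero-set and $a,b\in\{1,2,\dots\}\cup\{\infty\}$. If $A'$ spans for the zero-set $\mathcal Z\cap R_{a,b}$, then there exists $A\supseteq A'$ which spans for $\mathcal Z$ and satisfies $|A|=|A'|+|\mathcal Z\setminus R_{a,b}|$; moreover, if $A'$ is thin, $A$ can be chosen thin. Consequently $$\gamma(\mathcal Z\cap R_{a,b})\ge\gamma(\mathcal Z)-|\mathcal Z\setminus R_{a,b}|,\qquad \gamma_{\rm thin}(\mathcal Z\cap R_{a,b})\ge\gamma_{\rm thin}(\mathcal Z)-|\mathcal Z\setminus R_{a,b}|.$$
   Context: $\mathbb Z_+=\{0,1,2,\dots\}$, $R_{a,b}=([0,a-1]\times[0,b-1])\cap\mathbb Z_+^2$, where $[0,\infty-1]$ means $[0,\infty)$. A zero-set is a union of rectangles $R_{a,b}$. $\mathrm{row}(x,A),\mathrm{col}(x,A)$ count the points of $A$ on the horizontal/vertical line through $x$; for a zero-set $\mathcal Z$, $\mathcal T(A)=A\cup\{x\notin A:(\mathrm{row}(x,A),\mathrm{col}(x,A))\notin\mathcal Z\}$; $A$ spans for $\mathcal Z$ if $\bigcup_t\mathcal T^t(A)=\mathbb Z_+^2$; $\gamma(\mathcal Z)$ is the minimal size of a finite spanning set. A set is thin if each of its points has no other point of the set on its horizontal line or no other point of the set on its vertical line; $\gamma_{\rm thin}(\mathcal Z)$ is the minimal size of a thin spanning set. *)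

theory Defs
  imports Main "HOL-Library.Extended_Nat"
begin

type_synonym point = "nat \<times> nat"

definition rect :: "enat \<Rightarrow> enat \<Rightarrow> point set" where
  "rect a b = {(i, j). enat i < a \<and> enat j < b}"

definition zero_set :: "point set \<Rightarrow> bool" where
  "zero_set Z \<longleftrightarrow> (\<exists>S. (\<forall>(a, b) \<in> S. 1 \<le> a \<and> 1 \<le> b) \<and>
      Z = (\<Union>(a, b) \<in> S. rect a b))"

definition ecount :: "'a set \<Rightarrow> enat" where
  "ecount S = (if finite S then enat (card S) else \<infinity>)"

definition row :: "point \<Rightarrow> point set \<Rightarrow> enat" where
  "row x A = ecount {y \<in> A. snd y = snd x}"

definition col :: "point \<Rightarrow> point set \<Rightarrow> enat" where
  "col x A = ecount {y \<in> A. fst y = fst x}"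

definition in_zero :: "point set \<Rightarrow> enat \<Rightarrow> enat \<Rightarrow> bool" where
  "in_zero Z r c \<longleftrightarrow> (\<exists>i j. r = enat i \<and> c = enat j \<and> (i, j) \<in> Z)"

definition T_op :: "point set \<Rightarrow> point set \<Rightarrow> point set" where
  "T_op Z A = A \<union> {x. x \<notin> A \<and> \<not> in_zero Z (row x A) (col x A)}"

definition spans :: "point set \<Rightarrow> point set \<Rightarrow> bool" where
  "spans Z A \<longleftrightarrow> (\<Union>t. (T_op Z ^^ t) A) = UNIV"

definition thin :: "point set \<Rightarrow> bool" where
  "thin A \<longleftrightarrow> (\<forall>x \<in> A. (\<forall>y \<in> A. snd y = snd x \<longrightarrow> y = x) \<or>
                        (\<forall>y \<in> A. fst y = fst x \<longrightarrow> y = x))"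

text \<open>Minimal size of a finite spanning set (infinity if none exists).\<close>
definition gamma :: "point set \<Rightarrow> enat" where
  "gamma Z = (INF A \<in> {A. finite A \<and> spans Z A}. enat (card A))"

definition gamma_thin :: "point set \<Rightarrow> enat" where
  "gamma_thin Z = (INF A \<in> {A. finite A \<and> thin A \<and> spans Z A}. enat (card A))"

end

theory Submission
  imports Defs
begin

text \<open>
  Zeros outside \<open>R\<^sub>a\<^sub>,\<^sub>b\<close> are removed one top row at a time and then, via the symmetry
  \<open>(i, j) \<mapsto> (j, i)\<close>, one right column at a time, and the numbers of added points add up. So let
  the top row \<open>j = b\<close> of \<open>\<Z>\<close> consist of \<open>w\<close> points and \<open>\<Z>' = {z \<in> \<Z>. z\<^sub>2 < b}\<close>. A spanning
  set \<open>A\<close> for \<open>\<Z>'\<close> is completed by \<open>w\<close> points on a row \<open>N\<close> lying above and to the right of \<open>A\<close>.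
  Since \<open>(w, b) \<notin> \<Z>\<close>, whenever a point \<open>y\<close> becomes occupied for \<open>\<Z>'\<close> but not for \<open>\<Z>\<close>, its
  column already holds \<open>b\<close> points, so the point of row \<open>N\<close> in that column gets occupied. That
  point was not counted before, because the \<open>\<Z>'\<close>-dynamics from \<open>A\<close> is invariant under permuting
  the rows \<open>\<ge> N\<close>, so row \<open>N\<close> only meets infinite columns. This pushes the column count of \<open>y\<close>
  to \<open>b + 1\<close>, beyond all zeros of \<open>\<Z>\<close>; thus two steps of the \<open>\<Z>\<close>-dynamics simulate one step
  of the \<open>\<Z>'\<close>-dynamics. The new points are alone in their columns, so thinness is preserved.
\<close>

definition down_closed :: "point set \<Rightarrow> bool" where
  "down_closed Z \<longleftrightarrow> (\<forall>i j i' j'. (i, j) \<in> Z \<longrightarrow> i' \<le> i \<longrightarrow> j' \<le> j \<longrightarrow> (i', j') \<in> Z)"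

lemma down_closed_rect: "down_closed (rect a b)"
  unfolding down_closed_def rect_def by (auto elim: le_less_trans[rotated])

lemma down_closed_Int: "down_closed Z \<Longrightarrow> down_closed Z' \<Longrightarrow> down_closed (Z \<inter> Z')"
  unfolding down_closed_def by auto

lemma down_closed_UN: "(\<And>s. s \<in> S \<Longrightarrow> down_closed (f s)) \<Longrightarrow> down_closed (\<Union>s\<in>S. f s)"
  unfolding down_closed_def by fast

lemma zero_set_down_closed: "zero_set Z \<Longrightarrow> down_closed Z"
  unfolding zero_set_def by (force intro: down_closed_UN down_closed_rect)

lemma card_top_row_notin:
  assumes "down_closed Z" and "finite Z"
  shows "(card {z \<in> Z. snd z = b}, b) \<notin> Z"
proof
  let ?w = "card {z \<in> Z. snd z = b}"
  assume "(?w, b) \<in> Z"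
  then have "(\<lambda>i. (i, b)) ` {..?w} \<subseteq> {z \<in> Z. snd z = b}"
    using assms(1) unfolding down_closed_def by auto
  then have "card ((\<lambda>i. (i, b)) ` {..?w}) \<le> ?w"
    using assms(2) by (intro card_mono) auto
  moreover have "card ((\<lambda>i. (i, b)) ` {..?w}) = Suc ?w"
    by (subst card_image) (auto simp: inj_on_def)
  ultimately show False by simp
qed

subsection \<open>Monotonicity of the growth operator\<close>

lemma ecount_mono: "A \<subseteq> B \<Longrightarrow> ecount A \<le> ecount B"
  unfolding ecount_def by (auto intro: card_mono dest: finite_subset)

lemma ecount_image: "inj_on f S \<Longrightarrow> ecount (f ` S) = ecount S"
  unfolding ecount_def by (simp add: finite_image_iff card_image)

lemma row_mono: "A \<subseteq> B \<Longrightarrow> row x A \<le> row x B"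
  unfolding row_def by (rule ecount_mono) auto

lemma col_mono: "A \<subseteq> B \<Longrightarrow> col x A \<le> col x B"
  unfolding col_def by (rule ecount_mono) auto

lemma in_zero_antimono:
  assumes "down_closed Z" and "in_zero Z r' c'" and "r \<le> r'" and "c \<le> c'"
  shows "in_zero Z r c"
proof -
  obtain i' j' where ij': "r' = enat i'" "c' = enat j'" "(i', j') \<in> Z"
    using assms(2) unfolding in_zero_def by auto
  obtain i j where ij: "r = enat i" "c = enat j"
    using assms(3,4) ij' enat_ile by blast
  have "i \<le> i'" "j \<le> j'" using assms(3,4) ij' ij by auto
  then show ?thesis using assms(1) ij' ij unfolding in_zero_def down_closed_def by blast
qed

lemma mem_T_op_if_not_in_zero:
  assumes "down_closed Z" and "\<not> in_zero Z r c" and "r \<le> row x A" and "c \<le> col x A"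
  shows "x \<in> T_op Z A"
  using in_zero_antimono[OF assms(1) _ assms(3,4)] assms(2) unfolding T_op_def by blast

lemma subset_T_op: "A \<subseteq> T_op Z A"
  unfolding T_op_def by blast

lemma T_op_mono:
  assumes "down_closed Z" and "A \<subseteq> B"
  shows "T_op Z A \<subseteq> T_op Z B"
proof
  fix x assume "x \<in> T_op Z A"
  then consider "x \<in> A" | "\<not> in_zero Z (row x A) (col x A)" unfolding T_op_def by blast
  then show "x \<in> T_op Z B"
  proof cases
    case 1 then show ?thesis using assms(2) subset_T_op by blast
  next
    case 2 then show ?thesis
      using mem_T_op_if_not_in_zero[OF assms(1)] row_mono[OF assms(2)] col_mono[OF assms(2)] by blast
  qed
qed

lemma funpow_T_op_mono: "m \<le> n \<Longrightarrow> (T_op Z ^^ m) A \<subseteq> (T_op Z ^^ n) A"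
proof (induction n)
  case (Suc n)
  then show ?case using subset_T_op[of "(T_op Z ^^ n) A" Z] by (cases "m = Suc n") auto
qed simp

subsection \<open>Symmetries\<close>

lemma T_op_image:
  assumes "bij \<phi>"
    and row_eq: "\<And>p q. snd (\<phi> p) = snd (\<phi> q) \<longleftrightarrow> snd p = snd q"
    and col_eq: "\<And>p q. fst (\<phi> p) = fst (\<phi> q) \<longleftrightarrow> fst p = fst q"
  shows "T_op Z (\<phi> ` A) = \<phi> ` T_op Z A"
proof -
  have inj: "inj \<phi>" using assms(1) bij_is_inj by blast
  have "{q \<in> \<phi> ` A. snd q = snd (\<phi> x)} = \<phi> ` {q \<in> A. snd q = snd x}" for x
    using row_eq by blast
  then have row: "row (\<phi> x) (\<phi> ` A) = row x A" for x
    unfolding row_def by (simp add: ecount_image inj_on_subset[OF inj])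
  have "{q \<in> \<phi> ` A. fst q = fst (\<phi> x)} = \<phi> ` {q \<in> A. fst q = fst x}" for x
    using col_eq by blast
  then have col: "col (\<phi> x) (\<phi> ` A) = col x A" for x
    unfolding col_def by (simp add: ecount_image inj_on_subset[OF inj])
  show ?thesis
  proof (rule set_eqI)
    fix x
    obtain x' where x: "x = \<phi> x'" using assms(1) by (metis bij_pointE)
    show "x \<in> T_op Z (\<phi> ` A) \<longleftrightarrow> x \<in> \<phi> ` T_op Z A"
      unfolding x T_op_def by (simp add: inj_image_mem_iff[OF inj] row col)
  qed
qed

lemma funpow_T_op_transpose_rows:
  assumes "\<forall>q\<in>A. snd q \<noteq> m \<and> snd q \<noteq> m'" and "(u, m) \<in> (T_op Z ^^ t) A"
  shows "(u, m') \<in> (T_op Z ^^ t) A"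
proof -
  define \<sigma> where "\<sigma> n = (if n = m then m' else if n = m' then m else n)" for n
  define \<phi> :: "point \<Rightarrow> point" where "\<phi> p = (fst p, \<sigma> (snd p))" for p
  have \<sigma>\<sigma>: "\<sigma> (\<sigma> n) = n" for n unfolding \<sigma>_def by auto
  have "bij \<phi>" by (rule involuntory_imp_bij) (simp add: \<phi>_def \<sigma>\<sigma>)
  moreover have "snd (\<phi> p) = snd (\<phi> q) \<longleftrightarrow> snd p = snd q" for p q
    unfolding \<phi>_def by (metis snd_conv \<sigma>\<sigma>)
  moreover have "fst (\<phi> p) = fst (\<phi> q) \<longleftrightarrow> fst p = fst q" for p q
    unfolding \<phi>_def by simp
  ultimately have "(T_op Z ^^ t) (\<phi> ` A) = \<phi> ` (T_op Z ^^ t) A" for t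
    by (induction t) (simp_all add: T_op_image)
  moreover have "\<phi> ` A = A"
    using assms(1) by (force simp: \<phi>_def \<sigma>_def)
  moreover have "(u, m') = \<phi> (u, m)" by (simp add: \<phi>_def \<sigma>_def)
  ultimately show ?thesis using assms(2) by (metis image_eqI)
qed

lemma col_funpow_T_op_far_row:
  assumes "\<forall>q\<in>A. snd q < N" and "(u, N) \<in> (T_op Z ^^ t) A"
  shows "col (u, N) ((T_op Z ^^ t) A) = \<infinity>"
proof -
  have "(u, j) \<in> (T_op Z ^^ t) A" if "N \<le> j" for j
  proof (cases "j = N")
    case False
    then show ?thesis
      by (intro funpow_T_op_transpose_rows[OF _ assms(2)]) (use assms(1) that in force)
  qed (use assms(2) in simp)
  then have "(\<lambda>j. (u, j)) ` {N..} \<subseteq> {q \<in> (T_op Z ^^ t) A. fst q = u}"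
    by auto
  moreover have "infinite ((\<lambda>j. (u, j)) ` {N..})"
    using infinite_Ici[of N] by (auto simp: inj_on_def dest!: finite_imageD)
  ultimately show ?thesis
    unfolding col_def ecount_def by (auto dest: finite_subset)
qed

lemma T_op_swap: "T_op (prod.swap ` Z) (prod.swap ` A) = prod.swap ` T_op Z A"
proof -
  have "{q \<in> prod.swap ` A. snd q = fst x} = prod.swap ` {q \<in> A. fst q = fst x}"
    "{q \<in> prod.swap ` A. fst q = snd x} = prod.swap ` {q \<in> A. snd q = snd x}" for x :: point
    by force+
  then have row: "row (prod.swap x) (prod.swap ` A) = col x A"
    and col: "col (prod.swap x) (prod.swap ` A) = row x A" for x
    unfolding row_def col_def by (simp_all add: ecount_image)
  have in_zero: "in_zero (prod.swap ` Z) c r = in_zero Z r c" for r c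
    unfolding in_zero_def by force
  show ?thesis
  proof (intro set_eqI)
    fix x :: point
    obtain x' where x: "x = prod.swap x'" by (metis swap_swap)
    show "x \<in> T_op (prod.swap ` Z) (prod.swap ` A) \<longleftrightarrow> x \<in> prod.swap ` T_op Z A"
      unfolding x T_op_def by (simp add: inj_image_mem_iff row col in_zero)
  qed
qed

lemma spans_swap:
  assumes "spans Z A"
  shows "spans (prod.swap ` Z) (prod.swap ` A)"
proof -
  have "(T_op (prod.swap ` Z) ^^ t) (prod.swap ` A) = prod.swap ` (T_op Z ^^ t) A" for t
    by (induction t) (simp_all add: T_op_swap)
  then have "(\<Union>t. (T_op (prod.swap ` Z) ^^ t) (prod.swap ` A)) = prod.swap ` (\<Union>t. (T_op Z ^^ t) A)"
    by (simp add: image_UN)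
  then show ?thesis
    using assms unfolding spans_def by simp
qed

lemma thin_swap: "thin A \<Longrightarrow> thin (prod.swap ` A)"
  unfolding thin_def by auto

lemma swap_rect: "prod.swap ` rect a b = rect b a"
  unfolding rect_def by auto

definition spans_extendable :: "point set \<Rightarrow> point set \<Rightarrow> bool" where
  "spans_extendable Z' Z \<longleftrightarrow> (\<forall>A. finite A \<and> spans Z' A \<longrightarrow>
     (\<exists>E. finite E \<and> A \<inter> E = {} \<and> card E = card (Z - Z') \<and> spans Z (A \<union> E) \<and>
          (thin A \<longrightarrow> thin (A \<union> E))))"

lemma spans_extendableI:
  assumes "\<And>A. finite A \<Longrightarrow> spans Z' A \<Longrightarrow> \<exists>E. finite E \<and> A \<inter> E = {} \<and>
    card E = card (Z - Z') \<and> spans Z (A \<union> E) \<and> (thin A \<longrightarrow> thin (A \<union> E))"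
  shows "spans_extendable Z' Z"
  using assms unfolding spans_extendable_def by simp

lemma spans_extendableE:
  assumes "spans_extendable Z' Z" and "finite A" and "spans Z' A"
  obtains E where "finite E" "A \<inter> E = {}" "card E = card (Z - Z')" "spans Z (A \<union> E)"
    "thin A \<longrightarrow> thin (A \<union> E)"
  using assms unfolding spans_extendable_def by meson

lemma spans_extendable_refl: "spans_extendable Z Z"
  by (rule spans_extendableI) (intro exI[of _ "{}"], simp)

lemma spans_extendable_trans:
  assumes "finite Z" and "Z'' \<subseteq> Z'" and "Z' \<subseteq> Z"
    and "spans_extendable Z'' Z'" and "spans_extendable Z' Z"
  shows "spans_extendable Z'' Z"
proof (rule spans_extendableI)
  fix A assume "finite A" "spans Z'' A"
  then obtain E where E: "finite E" "A \<inter> E = {}" "card E = card (Z' - Z'')"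
    "spans Z' (A \<union> E)" "thin A \<longrightarrow> thin (A \<union> E)"
    by (rule spans_extendableE[OF assms(4)])
  from \<open>finite A\<close> E(1) have "finite (A \<union> E)" by simp
  then obtain E' where E': "finite E'" "(A \<union> E) \<inter> E' = {}" "card E' = card (Z - Z')"
    "spans Z (A \<union> E \<union> E')" "thin (A \<union> E) \<longrightarrow> thin (A \<union> E \<union> E')"
    by (rule spans_extendableE[OF assms(5) _ E(4)])
  have "Z - Z'' = (Z' - Z'') \<union> (Z - Z')" and "(Z' - Z'') \<inter> (Z - Z') = {}"
    using assms(2,3) by auto
  then have "card (Z - Z'') = card (Z' - Z'') + card (Z - Z')"
    using assms(1,3) finite_subset by (metis card_Un_disjoint finite_Diff)
  moreover have "card (E \<union> E') = card E + card E'"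
    using E(1) E'(1,2) by (intro card_Un_disjoint) auto
  ultimately show "\<exists>E. finite E \<and> A \<inter> E = {} \<and> card E = card (Z - Z'') \<and>
      spans Z (A \<union> E) \<and> (thin A \<longrightarrow> thin (A \<union> E))"
    using E E' by (intro exI[of _ "E \<union> E'"]) (auto simp: Un_assoc)
qed

lemma spans_extendable_swap:
  assumes "spans_extendable Z' Z"
  shows "spans_extendable (prod.swap ` Z') (prod.swap ` Z)"
proof (rule spans_extendableI)
  fix A assume "finite A" "spans (prod.swap ` Z') A"
  then have "finite (prod.swap ` A)" "spans Z' (prod.swap ` A)"
    using spans_swap[of "prod.swap ` Z'" A] by (simp_all add: image_image)
  then obtain E where E: "finite E" "prod.swap ` A \<inter> E = {}" "card E = card (Z - Z')"
    "spans Z (prod.swap ` A \<union> E)" "thin (prod.swap ` A) \<longrightarrow> thin (prod.swap ` A \<union> E)"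
    by (rule spans_extendableE[OF assms])
  have swap_back: "prod.swap ` (prod.swap ` A \<union> E) = A \<union> prod.swap ` E"
    by (simp add: image_Un image_image)
  show "\<exists>E. finite E \<and> A \<inter> E = {} \<and> card E = card (prod.swap ` Z - prod.swap ` Z') \<and>
      spans (prod.swap ` Z) (A \<union> E) \<and> (thin A \<longrightarrow> thin (A \<union> E))"
  proof (intro exI[of _ "prod.swap ` E"] conjI impI)
    show "A \<inter> prod.swap ` E = {}" using E(2) by force
    show "card (prod.swap ` E) = card (prod.swap ` Z - prod.swap ` Z')"
      using E(3) by (simp add: card_image image_set_diff[symmetric])
    show "spans (prod.swap ` Z) (A \<union> prod.swap ` E)"
      using spans_swap[OF E(4)] swap_back by simp
    show "thin (A \<union> prod.swap ` E)" if "thin A"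
      using E(5) thin_swap[OF that] thin_swap[of "prod.swap ` A \<union> E"] swap_back by simp
  qed (use E(1) in simp)
qed

subsection \<open>Removing the top row of zeros\<close>

lemma T_op_top_row_simulation:
  fixes b w N :: nat
  assumes dc: "down_closed Z" and top: "\<forall>z\<in>Z. snd z \<le> b" and wb: "(w, b) \<notin> Z"
    and BD: "B \<subseteq> D" and HD: "H \<subseteq> D" and H: "finite H" "card H = w" "\<forall>q\<in>H. snd q = N"
    and far: "\<And>u. (u, N) \<in> B \<Longrightarrow> col (u, N) B = \<infinity>"
  shows "T_op {z \<in> Z. snd z < b} B \<subseteq> T_op Z (T_op Z D)"
proof
  fix y assume y: "y \<in> T_op {z \<in> Z. snd z < b} B"
  let ?D = "T_op Z D"
  have BD': "B \<subseteq> ?D" using BD subset_T_op by blast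
  show "y \<in> T_op Z ?D"
  proof (cases "in_zero Z (row y B) (col y B)")
    case False
    then have "y \<in> T_op Z B"
      using mem_T_op_if_not_in_zero[OF dc] by blast
    then show ?thesis using T_op_mono[OF dc BD'] by blast
  next
    case True
    then obtain r c where rc: "row y B = enat r" "col y B = enat c" "(r, c) \<in> Z"
      unfolding in_zero_def by blast
    have "y \<in> B \<or> \<not> in_zero {z \<in> Z. snd z < b} (row y B) (col y B)"
      using y unfolding T_op_def by blast
    then consider "y \<in> B" | "col y B = enat b"
      using rc top unfolding in_zero_def by fastforce
    then show ?thesis
    proof cases
      case 1 then show ?thesis using BD' subset_T_op by blast
    next
      case col_y: 2
      define p where "p = (fst y, N)"
      define S where "S = {q \<in> B. fst q = fst y}"
      have S: "finite S" "card S = b"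
        using col_y unfolding col_def ecount_def S_def by (simp_all split: if_splits)
      have "H \<subseteq> {q \<in> D. snd q = snd p}"
        using HD H(3) unfolding p_def by auto
      then have "ecount H \<le> row p D"
        unfolding row_def by (rule ecount_mono)
      then have "enat w \<le> row p D"
        using H(1,2) unfolding ecount_def by simp
      moreover have "enat b \<le> col p D"
        using col_mono[OF BD, of y] col_y unfolding col_def p_def by simp
      moreover have "\<not> in_zero Z (enat w) (enat b)" using wb unfolding in_zero_def by simp
      ultimately have "p \<in> ?D" using mem_T_op_if_not_in_zero[OF dc] by blast
      moreover have "p \<notin> S"
        using far[of "fst y"] col_y unfolding S_def p_def col_def by auto
      ultimately have "insert p S \<subseteq> {q \<in> ?D. fst q = fst y}" and "ecount (insert p S) = enat (Suc b)"
        using BD' S unfolding S_def p_def ecount_def by auto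
      then have "enat (Suc b) \<le> col y ?D"
        unfolding col_def by (metis ecount_mono)
      moreover have "\<not> in_zero Z (row y ?D) (enat (Suc b))"
        using top unfolding in_zero_def by fastforce
      ultimately show ?thesis using mem_T_op_if_not_in_zero[OF dc] by blast
    qed
  qed
qed

lemma thin_Un_far_row:
  assumes "thin A" and "\<forall>q\<in>A. fst q < N \<and> snd q < N"
  shows "thin (A \<union> (\<lambda>i. (N + i, N)) ` I)"
  using assms unfolding thin_def by fastforce

lemma spans_extendable_top_row:
  assumes dc: "down_closed Z" and "finite Z" and top: "\<forall>z\<in>Z. snd z \<le> b"
  shows "spans_extendable {z \<in> Z. snd z < b} Z"
proof (rule spans_extendableI)
  fix A assume "finite A" and sp: "spans {z \<in> Z. snd z < b} A"
  define w where "w = card {z \<in> Z. snd z = b}"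
  have "finite (fst ` A \<union> snd ` A)" using \<open>finite A\<close> by simp
  then obtain N where "\<forall>n \<in> fst ` A \<union> snd ` A. n < N"
    unfolding finite_nat_set_iff_bounded by auto
  then have N: "\<forall>q\<in>A. fst q < N \<and> snd q < N" by simp
  define H where "H = (\<lambda>i. (N + i, N)) ` {..<w}"
  have H: "finite H" "card H = w" "\<forall>q\<in>H. snd q = N" "A \<inter> H = {}"
    unfolding H_def using N by (auto simp: card_image inj_on_def)
  have wb: "(w, b) \<notin> Z"
    unfolding w_def using dc \<open>finite Z\<close> by (rule card_top_row_notin)
  have sim: "(T_op {z \<in> Z. snd z < b} ^^ t) A \<subseteq> (T_op Z ^^ (2 * t)) (A \<union> H)" for t
  proof (induction t)
    case (Suc t)
    have "H \<subseteq> (T_op Z ^^ (2 * t)) (A \<union> H)"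
      using funpow_T_op_mono[of 0 "2 * t" Z "A \<union> H"] by auto
    moreover have "col (u, N) ((T_op {z \<in> Z. snd z < b} ^^ t) A) = \<infinity>"
      if "(u, N) \<in> (T_op {z \<in> Z. snd z < b} ^^ t) A" for u
      using col_funpow_T_op_far_row N that by blast
    ultimately have "T_op {z \<in> Z. snd z < b} ((T_op {z \<in> Z. snd z < b} ^^ t) A)
        \<subseteq> T_op Z (T_op Z ((T_op Z ^^ (2 * t)) (A \<union> H)))"
      by (intro T_op_top_row_simulation[OF dc top wb Suc.IH _ H(1-3)])
    then show ?case by (simp add: numeral_2_eq_2)
  qed simp
  have "(T_op {z \<in> Z. snd z < b} ^^ t) A \<subseteq> (\<Union>s. (T_op Z ^^ s) (A \<union> H))" for t
    using sim[of t] by (rule order_trans) (rule UN_upper, simp)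
  then have "(\<Union>t. (T_op {z \<in> Z. snd z < b} ^^ t) A) \<subseteq> (\<Union>s. (T_op Z ^^ s) (A \<union> H))"
    by (rule UN_least)
  then have "spans Z (A \<union> H)"
    using sp unfolding spans_def by (simp add: top.extremum_unique)
  moreover have "Z - {z \<in> Z. snd z < b} = {z \<in> Z. snd z = b}"
    using top le_neq_implies_less by auto
  moreover have "thin A \<longrightarrow> thin (A \<union> H)"
    unfolding H_def using N thin_Un_far_row by simp
  ultimately show "\<exists>E. finite E \<and> A \<inter> E = {} \<and> card E = card (Z - {z \<in> Z. snd z < b}) \<and>
      spans Z (A \<union> E) \<and> (thin A \<longrightarrow> thin (A \<union> E))"
    using H unfolding w_def by (intro exI[of _ H]) auto
qed

subsection \<open>Removing everything outside a rectangle\<close>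

lemma spans_extendable_rows_between:
  assumes "down_closed Z" and "finite Z"
  shows "spans_extendable (Z \<inter> rect \<infinity> (enat b)) (Z \<inter> rect \<infinity> (enat (b + n)))"
proof (induction n)
  case 0 show ?case by (simp add: spans_extendable_refl)
next
  case (Suc n)
  let ?Z = "Z \<inter> rect \<infinity> (enat (b + Suc n))"
  have "down_closed ?Z" by (intro down_closed_Int assms(1) down_closed_rect)
  then have "spans_extendable {z \<in> ?Z. snd z < b + n} ?Z"
    by (rule spans_extendable_top_row) (use assms(2) in \<open>auto simp: rect_def\<close>)
  moreover have "{z \<in> ?Z. snd z < b + n} = Z \<inter> rect \<infinity> (enat (b + n))"
    by (auto simp: rect_def)
  ultimately have "spans_extendable (Z \<inter> rect \<infinity> (enat (b + n))) ?Z" by simp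
  with Suc.IH show ?case
    by (rule spans_extendable_trans[rotated 3]) (use assms(2) in \<open>auto simp: rect_def\<close>)
qed

lemma spans_extendable_Int_rect_rows:
  assumes "down_closed Z" and "finite Z"
  shows "spans_extendable (Z \<inter> rect \<infinity> b) Z"
proof (cases b)
  case infinity
  then show ?thesis by (simp add: rect_def spans_extendable_refl)
next
  case (enat b0)
  have "finite (snd ` Z)" using assms(2) by simp
  then obtain M where "\<forall>m \<in> snd ` Z. m < M"
    unfolding finite_nat_set_iff_bounded by blast
  then have "Z \<inter> rect \<infinity> (enat (b0 + M)) = Z" by (auto simp: rect_def)
  then show ?thesis using spans_extendable_rows_between[OF assms, of b0 M] enat by simp
qed

lemma spans_extendable_Int_rect:
  assumes "down_closed Z" and "finite Z"
  shows "spans_extendable (Z \<inter> rect a b) Z"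
proof -
  have "down_closed (prod.swap ` Z)"
    using assms(1) unfolding down_closed_def by auto
  then have "spans_extendable (prod.swap ` Z \<inter> rect \<infinity> a) (prod.swap ` Z)"
    by (rule spans_extendable_Int_rect_rows) (use assms(2) in simp)
  then have "spans_extendable (prod.swap ` (prod.swap ` Z \<inter> rect \<infinity> a)) (prod.swap ` prod.swap ` Z)"
    by (rule spans_extendable_swap)
  then have cols: "spans_extendable (Z \<inter> rect a \<infinity>) Z"
    by (simp add: image_Int swap_rect image_image)
  have "down_closed (Z \<inter> rect a \<infinity>)" by (intro down_closed_Int assms(1) down_closed_rect)
  then have "spans_extendable ((Z \<inter> rect a \<infinity>) \<inter> rect \<infinity> b) (Z \<inter> rect a \<infinity>)"
    by (rule spans_extendable_Int_rect_rows) (use assms(2) in simp)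
  moreover have "(Z \<inter> rect a \<infinity>) \<inter> rect \<infinity> b = Z \<inter> rect a b" by (auto simp: rect_def)
  ultimately have rows: "spans_extendable (Z \<inter> rect a b) (Z \<inter> rect a \<infinity>)" by simp
  have "Z \<inter> rect a b \<subseteq> Z \<inter> rect a \<infinity>" by (auto simp: rect_def)
  then show ?thesis by (rule spans_extendable_trans[OF assms(2) _ Int_lower1 rows cols])
qed

lemma INF_card_le_add:
  assumes "\<And>A'. A' \<in> S' \<Longrightarrow> \<exists>A\<in>S. card A = card A' + k"
  shows "(INF A\<in>S. enat (card A)) \<le> (INF A\<in>S'. enat (card A)) + enat k"
proof (cases "S' = {}")
  case False
  then obtain A' where A': "A' \<in> S'" "(INF A\<in>S'. enat (card A)) = enat (card A')"
    using wellorder_InfI[of _ "(\<lambda>A. enat (card A)) ` S'"] by blast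
  then obtain A where "A \<in> S" "card A = card A' + k" using assms by blast
  then show ?thesis using A' INF_lower[of A S "\<lambda>A. enat (card A)"] by simp
qed (simp add: top_enat_def)

theorem mainTheorem8:
  fixes Z :: "point set" and a b :: enat
  assumes "zero_set Z" and "finite Z" and "1 \<le> a" and "1 \<le> b"
  shows "(\<forall>A'. finite A' \<and> spans (Z \<inter> rect a b) A' \<longrightarrow>
            (\<exists>A. A' \<subseteq> A \<and> finite A \<and> spans Z A \<and>
                 card A = card A' + card (Z - rect a b) \<and> (thin A' \<longrightarrow> thin A)))
       \<and> gamma Z \<le> gamma (Z \<inter> rect a b) + enat (card (Z - rect a b))
       \<and> gamma_thin Z \<le> gamma_thin (Z \<inter> rect a b) + enat (card (Z - rect a b))"
proof -
  have ext: "spans_extendable (Z \<inter> rect a b) Z"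
    using spans_extendable_Int_rect zero_set_down_closed assms(1,2) by blast
  have extend: "\<exists>A. A' \<subseteq> A \<and> finite A \<and> spans Z A \<and>
      card A = card A' + card (Z - rect a b) \<and> (thin A' \<longrightarrow> thin A)"
    if A': "finite A'" "spans (Z \<inter> rect a b) A'" for A'
  proof -
    have "Z - Z \<inter> rect a b = Z - rect a b" by blast
    then obtain E where "finite E" "A' \<inter> E = {}" "card E = card (Z - rect a b)"
      "spans Z (A' \<union> E)" "thin A' \<longrightarrow> thin (A' \<union> E)"
      using spans_extendableE[OF ext A'] by metis
    then show ?thesis
      using A'(1) by (intro exI[of _ "A' \<union> E"]) (auto simp: card_Un_disjoint)
  qed
  have "gamma Z \<le> gamma (Z \<inter> rect a b) + enat (card (Z - rect a b))"
    unfolding gamma_def by (rule INF_card_le_add) (use extend in blast)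
  moreover have "gamma_thin Z \<le> gamma_thin (Z \<inter> rect a b) + enat (card (Z - rect a b))"
    unfolding gamma_thin_def by (rule INF_card_le_add) (use extend in blast)
  ultimately show ?thesis using extend by blast
qed

end
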